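(* Let $N\ge4$ be even. Take $X_j=\sigma_z$, $X_j'=\sigma_x$ for $j=1,\dots,N-1$, and $X_N=(\sigma_z+\sigma_x)/\sqrt2$, $X_N'=(\sigma_z-\sigma_x)/\sqrt2$, and let $I^N_{CHSH}=\sum_{a,b\in\{0,1\}}(-1)^{ab}\mathbb A_a\otimes\mathbb B_b$. Then $\langle G|I^N_{CHSH}|G\rangle=2\sqrt2$, $2\sqrt2$ is the largest eigenvalue of $I^N_{CHSH}$, and its eigenspace has dimension $2^{N-2}$; it is spanned by the orthonormal states $\bigotimes_{k\in K}\sigma_x^{(k)}|G\rangle$ where $K$ ranges over subsets of $\{1,\dots,N-1\}$ of even cardinality.
   Context: $|G\rangle=\frac{1}{\sqrt2}(|0\cdots0\rangle+|1\cdots1\rangle)$ is the $N$-qubit GHZ state; $\sigma_x,\sigma_y,\sigma_z$ are Pauli matrices and $\sigma_x^{(k)}$ denotes $\sigma_x$ acting on the $k$-th qubit (identity elsewhere). $\mathbb A_0=\bigotimes_{j=1}^{N-1}X_j$, $\mathbb A_1=\bigotimes_{j=1}^{N-1}X_j'$ act on qubits $1,\dots,N-1$, and $\mathbb B_0=X_N$, $\mathbb B_1=X_N'$ act on qubit $N$. *)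

theory Defs
  imports "Jordan_Normal_Form.Jordan_Normal_Form_Uniqueness"
begin

text \<open>Computational basis index i < 2^N; qubit k (1 \<le> k \<le> N) carries the bit
 (i div 2^(N-k)) mod 2, i.e. qubit 1 is the most significant bit.\<close>

definition qbit :: "nat \<Rightarrow> nat \<Rightarrow> nat \<Rightarrow> nat" where
  "qbit N k i = (i div 2 ^ (N - k)) mod 2"

text \<open>Kronecker (tensor) product A 1 (x) A 2 (x) ... (x) A N of single-qubit (2x2) operators.\<close>
definition tensor_ops :: "nat \<Rightarrow> (nat \<Rightarrow> complex mat) \<Rightarrow> complex mat" where
  "tensor_ops N A = mat (2 ^ N) (2 ^ N)
     (\<lambda>(i, j). \<Prod>k\<in>{1..N}. A k $$ (qbit N k i, qbit N k j))"

definition sigma_x :: "complex mat" where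
  "sigma_x = mat_of_rows_list 2 [[0, 1], [1, 0]]"

definition sigma_y :: "complex mat" where
  "sigma_y = mat_of_rows_list 2 [[0, -\<i>], [\<i>, 0]]"

definition sigma_z :: "complex mat" where
  "sigma_z = mat_of_rows_list 2 [[1, 0], [0, -1]]"

definition ghz :: "nat \<Rightarrow> complex vec" where
  "ghz N = vec (2 ^ N) (\<lambda>i. if i = 0 \<or> i = 2 ^ N - 1 then complex_of_real (1 / sqrt 2) else 0)"

definition X_obs :: "nat \<Rightarrow> nat \<Rightarrow> complex mat" where
  "X_obs N j = (if j = N then (complex_of_real (1 / sqrt 2)) \<cdot>\<^sub>m (sigma_z + sigma_x) else sigma_z)"

definition X'_obs :: "nat \<Rightarrow> nat \<Rightarrow> complex mat" where
  "X'_obs N j = (if j = N then (complex_of_real (1 / sqrt 2)) \<cdot>\<^sub>m (sigma_z - sigma_x) else sigma_x)"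

text \<open>A_a (x) B_b as an operator on the N qubits: A_0 = (x)_{j<N} X_j, A_1 = (x)_{j<N} X'_j,
  B_0 = X_N, B_1 = X'_N.\<close>
definition AB_op :: "nat \<Rightarrow> nat \<Rightarrow> nat \<Rightarrow> complex mat" where
  "AB_op N a b = tensor_ops N (\<lambda>j. if j < N then (if a = 0 then X_obs N j else X'_obs N j)
                                    else (if b = 0 then X_obs N j else X'_obs N j))"

definition I_CHSH :: "nat \<Rightarrow> complex mat" where
  "I_CHSH N = AB_op N 0 0 + AB_op N 0 1 + AB_op N 1 0 + (-1) \<cdot>\<^sub>m AB_op N 1 1"

definition flip_state :: "nat \<Rightarrow> nat set \<Rightarrow> complex vec" where
  "flip_state N K = tensor_ops N (\<lambda>j. if j \<in> K then sigma_x else 1\<^sub>m 2) *\<^sub>v ghz N"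

end

theory Submission
  imports Defs
begin

(*
  Since X_N + X_N' = sqrt 2 sigma_z and X_N - X_N' = sqrt 2 sigma_x, the CHSH operator equals
  sqrt 2 (Z + X) with Z = sigma_z^(x)N and X = sigma_x^(x)N. In the computational basis Z is the
  diagonal matrix of parity signs and X the permutation complementing all bits; for even N these
  commute, so the operator splits into the 2x2 blocks sqrt 2 [[s, 1], [1, s]] on the pairs
  {i, complement i}, with eigenvalues sqrt 2 (s +- 1) in {2 sqrt 2, 0, -2 sqrt 2}. The
  2 sqrt 2-eigenspace consists of the complement-symmetric vectors supported on even parity, and the
  normalised pairs (|i> + |complement i>)/sqrt 2 of even parity form an orthonormal basis of it.
  These pairs are exactly the states sigma_x^K |G> with K an even subset of {1..N-1}: the GHZ
  branch |i> is reached from |0...0> or |1...1> by flipping the qubits that disagree with qubit N.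
*)

lemma mult_mat_vec_index_sum:
  assumes "M \<in> carrier_mat n n" "v \<in> carrier_vec n" "i < n"
  shows "(M *\<^sub>v v) $ i = (\<Sum>j<n. M $$ (i, j) * v $ j)"
  using assms by (auto simp: scalar_prod_def lessThan_atLeast0 intro: sum.cong)

lemma prod_if_else_zero:
  assumes "finite A"
  shows "(\<Prod>k\<in>A. if P k then f k else 0) = (if \<forall>k\<in>A. P k then prod f A else (0::'a::comm_semiring_1))"
  using assms by (induction A rule: finite_induct) auto

lemma cscalar_prod_sum:
  assumes "u \<in> carrier_vec n" "w \<in> carrier_vec n"
  shows "u \<bullet>c w = (\<Sum>i<n. u $ i * cnj (w $ i))"
  using assms by (auto simp: scalar_prod_def lessThan_atLeast0 intro: sum.cong)

lemma mat_kernel_char_matrix: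
  assumes "A \<in> carrier_mat n n"
  shows "mat_kernel (char_matrix A e) = {v \<in> carrier_vec n. A *\<^sub>v v = e \<cdot>\<^sub>v v}"
proof -
  have "char_matrix A e *\<^sub>v v = 0\<^sub>v n \<longleftrightarrow> A *\<^sub>v v = e \<cdot>\<^sub>v v" if "v \<in> carrier_vec n" for v
  proof (cases "v = 0\<^sub>v n")
    case True
    have "M *\<^sub>v 0\<^sub>v n = 0\<^sub>v n" if "M \<in> carrier_mat n n" for M :: "'a mat"
      using that by (intro eq_vecI) (auto simp: scalar_prod_def)
    moreover have "e \<cdot>\<^sub>v 0\<^sub>v n = (0\<^sub>v n :: 'a vec)" by (intro eq_vecI) auto
    ultimately show ?thesis using True assms by simp
  next
    case False
    then show ?thesis using eigenvector_char_matrix[OF assms, of v e] that assms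
      unfolding eigenvector_def by auto
  qed
  then show ?thesis unfolding mat_kernel[OF char_matrix_closed[OF assms]] by blast
qed

context vec_space
begin

lemma span_subset_eigenspace:
  assumes "A \<in> carrier_mat n n" "F \<subseteq> {v \<in> carrier_vec n. A *\<^sub>v v = e \<cdot>\<^sub>v v}"
  shows "span F \<subseteq> {v \<in> carrier_vec n. A *\<^sub>v v = e \<cdot>\<^sub>v v}"
proof -
  interpret K: kernel n n "char_matrix A e" using assms(1) by unfold_locales simp
  have "F \<subseteq> mat_kernel (char_matrix A e)" using assms by (simp add: mat_kernel_char_matrix)
  then show ?thesis
    using K.span_same K.Ker.span_closed by (auto simp: mat_kernel_char_matrix[OF assms(1), symmetric])
qed

lemma dim_gen_eigenspace_eq_card:
  assumes A: "A \<in> carrier_mat n n" and "finite F" "F \<subseteq> carrier_vec n"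
    and "lin_indpt F" and span: "span F = {v \<in> carrier_vec n. A *\<^sub>v v = e \<cdot>\<^sub>v v}"
  shows "dim_gen_eigenspace A e 1 = card F"
proof -
  define C where "C = char_matrix A e"
  interpret K: kernel n n C using A unfolding C_def by unfold_locales simp
  have kernel: "mat_kernel C = span F" unfolding C_def span mat_kernel_char_matrix[OF A] ..
  have F_kernel: "F \<subseteq> mat_kernel C"
    unfolding kernel using span_mem[OF assms(3)] by auto
  have "K.basis F"
    unfolding K.Ker.basis_def using F_kernel K.lindep_same[OF F_kernel] K.span_same[OF F_kernel] kernel assms(4)
    by simp
  then have "K.dim = card F" using \<open>finite F\<close> by (intro K.Ker.dim_basis)
  moreover have "C ^\<^sub>m 1 = C" using A unfolding C_def by simp
  ultimately show ?thesis unfolding dim_gen_eigenspace_def C_def[symmetric] by simp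
qed

end

lemma lin_indpt_if_orthonormal:
  fixes F :: "complex vec set"
  assumes "finite F" "F \<subseteq> carrier_vec n" "\<And>u w. u \<in> F \<Longrightarrow> w \<in> F \<Longrightarrow> u \<bullet>c w = (if u = w then 1 else 0)"
  shows "\<not> module.lin_dep class_ring (module_vec TYPE(complex) n) F"
proof -
  interpret V: vec_space "TYPE(complex)" n .
  have "a w = 0" if "V.lincomb a F = 0\<^sub>v n" "w \<in> F" for a w
  proof -
    have w: "conjugate w \<in> carrier_vec n" using assms(2) \<open>w \<in> F\<close> by auto
    have "0 = V.lincomb a F \<bullet>c w" using that(1) w by simp
    also have "\<dots> = (\<Sum>u\<in>F. a u * (u \<bullet>c w))"
      unfolding V.lincomb_def using assms(2) w
      by (subst V.finsum_scalar_prod_sum) (auto intro!: sum.cong)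
    also have "\<dots> = (\<Sum>u\<in>F. if u = w then a u else 0)"
      using assms(3)[OF _ \<open>w \<in> F\<close>] by (intro sum.cong) auto
    also have "\<dots> = a w" using assms(1) \<open>w \<in> F\<close> by simp
    finally show ?thesis by simp
  qed
  then show ?thesis using V.finite_lin_indpt2[OF assms(1,2)] by blast
qed

lemma card_even_subsets:
  assumes "finite S" "S \<noteq> {}"
  shows "2 * card {T. T \<subseteq> S \<and> even (card T)} = 2 ^ card S"
proof -
  have "card {T. T \<subseteq> S \<and> {} \<subseteq> T \<and> even (card T)} = card {T. T \<subseteq> S \<and> {} \<subseteq> T \<and> odd (card T)}"
    by (rule card_subsupersets_even_odd) (use assms in auto)
  moreover have "Pow S = {T. T \<subseteq> S \<and> even (card T)} \<union> {T. T \<subseteq> S \<and> odd (card T)}" by auto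
  then have "card (Pow S) = card {T. T \<subseteq> S \<and> even (card T)} + card {T. T \<subseteq> S \<and> odd (card T)}"
    by (simp only:) (rule card_Un_disjoint, use assms in auto)
  ultimately show ?thesis using assms(1) by (simp add: card_Pow)
qed

lemma Collect_restrict_eq_iff: "K \<subseteq> S \<Longrightarrow> {k \<in> S. P k} = K \<longleftrightarrow> (\<forall>k\<in>S. k \<in> K \<longleftrightarrow> P k)"
  by blast

section \<open>Operators pairing indices with equal signs\<close>

locale paired_sign_operator =
  fixes n :: nat and A :: "complex mat" and r :: complex
    and \<sigma> :: "nat \<Rightarrow> nat" and s :: "nat \<Rightarrow> complex"
  assumes carrier: "A \<in> carrier_mat n n"
    and scale_nonzero: "r \<noteq> 0"
    and action: "\<And>v i. v \<in> carrier_vec n \<Longrightarrow> i < n \<Longrightarrow> (A *\<^sub>v v) $ i = r * (s i * v $ i + v $ \<sigma> i)"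
    and pair_less: "\<And>i. i < n \<Longrightarrow> \<sigma> i < n"
    and pair_involution: "\<And>i. i < n \<Longrightarrow> \<sigma> (\<sigma> i) = i"
    and sign_cases: "\<And>i. i < n \<Longrightarrow> s i = 1 \<or> s i = -1"
    and sign_pair: "\<And>i. i < n \<Longrightarrow> s (\<sigma> i) = s i"
begin

lemma pair_equations:
  assumes "v \<in> carrier_vec n" "A *\<^sub>v v = mu \<cdot>\<^sub>v v" "i < n"
  shows "r * (s i * v $ i + v $ \<sigma> i) = mu * v $ i"
    and "r * (s i * v $ \<sigma> i + v $ i) = mu * v $ \<sigma> i"
proof -
  have "(A *\<^sub>v v) $ j = mu * v $ j" if "j < n" for j
    using assms(1,2) that by simp
  then show "r * (s i * v $ i + v $ \<sigma> i) = mu * v $ i"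
    and "r * (s i * v $ \<sigma> i + v $ i) = mu * v $ \<sigma> i"
    using action[OF assms(1)] assms(3) pair_less pair_involution sign_pair by metis+
qed

lemma eigenvalue_cases:
  assumes "eigenvalue A mu"
  shows "mu = 2 * r \<or> mu = 0 \<or> mu = - 2 * r"
proof -
  obtain v where v: "v \<in> carrier_vec n" "v \<noteq> 0\<^sub>v n" "A *\<^sub>v v = mu \<cdot>\<^sub>v v"
    using assms carrier unfolding eigenvalue_def eigenvector_def by auto
  obtain i where i: "i < n" "v $ i \<noteq> 0"
    using v(1,2) by (metis eq_vecI carrier_vecD index_zero_vec)
  define t where "t = mu / r - s i"
  have "v $ \<sigma> i = t * v $ i" and "v $ i = t * v $ \<sigma> i"
    using pair_equations[OF v(1,3) i(1)] scale_nonzero unfolding t_def by (simp_all add: field_simps)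
  then have "t * t = 1" using i(2) by (metis mult.assoc mult_cancel_right1 mult.commute)
  then have "t = 1 \<or> t = -1" by (metis square_eq_1_iff power2_eq_square)
  moreover have "mu = r * (s i + t)" using scale_nonzero unfolding t_def by (simp add: field_simps)
  ultimately show ?thesis using sign_cases[OF i(1)] by auto
qed

lemma top_eigenvector_iff:
  assumes v: "v \<in> carrier_vec n"
  shows "A *\<^sub>v v = (2 * r) \<cdot>\<^sub>v v \<longleftrightarrow> (\<forall>i<n. v $ \<sigma> i = v $ i \<and> (s i = -1 \<longrightarrow> v $ i = 0))"
proof
  assume eigen: "A *\<^sub>v v = (2 * r) \<cdot>\<^sub>v v"
  show "\<forall>i<n. v $ \<sigma> i = v $ i \<and> (s i = -1 \<longrightarrow> v $ i = 0)"
  proof (intro allI impI)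
    fix i assume i: "i < n"
    have "s i * v $ i + v $ \<sigma> i = 2 * v $ i" and "s i * v $ \<sigma> i + v $ i = 2 * v $ \<sigma> i"
      using pair_equations[OF v eigen i] scale_nonzero by (simp_all add: mult.assoc)
    then show "v $ \<sigma> i = v $ i \<and> (s i = -1 \<longrightarrow> v $ i = 0)"
      using sign_cases[OF i] by auto
  qed
next
  assume pairs: "\<forall>i<n. v $ \<sigma> i = v $ i \<and> (s i = -1 \<longrightarrow> v $ i = 0)"
  show "A *\<^sub>v v = (2 * r) \<cdot>\<^sub>v v"
  proof (rule eq_vecI)
    fix i assume "i < dim_vec ((2 * r) \<cdot>\<^sub>v v)"
    then have i: "i < n" using v by simp
    show "(A *\<^sub>v v) $ i = ((2 * r) \<cdot>\<^sub>v v) $ i"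
      using action[OF v i] pairs sign_cases[OF i] i v by auto
  qed (use carrier v in simp)
qed

end

section \<open>Qubit indices\<close>

lemma sum_binary_digits_eq_mod: "(\<Sum>m<n. ((i::nat) div 2 ^ m mod 2) * 2 ^ m) = i mod 2 ^ n"
proof (induction n)
  case (Suc n)
  have "i mod 2 ^ Suc n = 2 ^ n * (i div 2 ^ n mod 2) + i mod 2 ^ n"
    by (metis mod_mult2_eq power_Suc2)
  then show ?case using Suc by (simp add: mult.commute)
qed simp

lemma binary_digits_of_sum:
  fixes g :: "nat \<Rightarrow> nat"
  assumes "\<forall>m<n. g m \<le> 1"
  shows "(\<Sum>m<n. g m * 2 ^ m) < 2 ^ n \<and> (\<forall>j<n. (\<Sum>m<n. g m * 2 ^ m) div 2 ^ j mod 2 = g j)"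
  using assms
proof (induction n arbitrary: g)
  case (Suc n)
  define h where "h m = g (Suc m)" for m
  have IH: "(\<Sum>m<n. h m * 2 ^ m) < 2 ^ n \<and> (\<forall>j<n. (\<Sum>m<n. h m * 2 ^ m) div 2 ^ j mod 2 = h j)"
    using Suc by (simp add: h_def)
  have g0: "g 0 \<le> 1" using Suc.prems by simp
  have split: "(\<Sum>m<Suc n. g m * 2 ^ m) = g 0 + 2 * (\<Sum>m<n. h m * 2 ^ m)"
    unfolding h_def sum.lessThan_Suc_shift by (simp add: sum_distrib_left mult.assoc mult.left_commute)
  have "(\<Sum>m<Suc n. g m * 2 ^ m) div 2 ^ j mod 2 = g j" if "j < Suc n" for j
  proof (cases j)
    case (Suc j')
    have "(g 0 + 2 * (\<Sum>m<n. h m * 2 ^ m)) div 2 ^ j = (\<Sum>m<n. h m * 2 ^ m) div 2 ^ j'"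
      using Suc g0 by (simp add: div_mult2_eq)
    then show ?thesis using split IH Suc that by (simp add: h_def)
  qed (use split g0 in simp)
  then show ?case using split IH g0 by simp
qed simp

definition bits_index :: "nat \<Rightarrow> (nat \<Rightarrow> nat) \<Rightarrow> nat" where
  "bits_index N g = (\<Sum>m<N. g (N - m) * 2 ^ m)"

lemma qbit_less_2 [simp]: "qbit N k i < 2"
  by (simp add: qbit_def)

lemma qbit_le_1 [simp]: "qbit N k i \<le> Suc 0"
  using qbit_less_2[of N k i] by linarith

lemma qbit_complement_complement [simp]: "Suc 0 - (Suc 0 - qbit N k i) = qbit N k i"
  using qbit_less_2[of N k i] by linarith

lemma qbit_0 [simp]: "qbit N k 0 = 0"
  by (simp add: qbit_def)

lemma qbit_cases: "qbit N k i = 0 \<or> qbit N k i = 1"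
  using qbit_less_2[of N k i] by linarith

lemma
  assumes "\<forall>k\<in>{1..N}. g k \<le> 1"
  shows bits_index_less: "bits_index N g < 2 ^ N"
    and qbit_bits_index: "k \<in> {1..N} \<Longrightarrow> qbit N k (bits_index N g) = g k"
proof -
  have "\<forall>m<N. g (N - m) \<le> 1" using assms by auto
  note digits = binary_digits_of_sum[OF this]
  then show "bits_index N g < 2 ^ N" by (simp add: bits_index_def)
  assume k: "k \<in> {1..N}"
  then have "N - k < N" by auto
  then have "bits_index N g div 2 ^ (N - k) mod 2 = g (N - (N - k))"
    using digits by (simp add: bits_index_def)
  then show "qbit N k (bits_index N g) = g k"
    using k by (simp add: qbit_def)
qed

lemma bits_index_qbit: "i < 2 ^ N \<Longrightarrow> bits_index N (\<lambda>k. qbit N k i) = i"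
proof -
  assume "i < 2 ^ N"
  have "bits_index N (\<lambda>k. qbit N k i) = (\<Sum>m<N. (i div 2 ^ m mod 2) * 2 ^ m)"
    unfolding bits_index_def qbit_def by (rule sum.cong) auto
  then show ?thesis using \<open>i < 2 ^ N\<close> by (simp add: sum_binary_digits_eq_mod)
qed

lemma index_eqI:
  assumes "i < 2 ^ N" "j < 2 ^ N" "\<forall>k\<in>{1..N}. qbit N k i = qbit N k j"
  shows "i = j"
proof -
  have "bits_index N (\<lambda>k. qbit N k i) = bits_index N (\<lambda>k. qbit N k j)"
    unfolding bits_index_def using assms(3) by (intro sum.cong) auto
  then show ?thesis using bits_index_qbit assms by metis
qed

lemma index_eq_iff_qbits_eq:
  "i < 2 ^ N \<Longrightarrow> j < 2 ^ N \<Longrightarrow> i = j \<longleftrightarrow> (\<forall>k\<in>{1..N}. qbit N k i = qbit N k j)"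
  using index_eqI by auto

lemma qbit_max_index: "k \<in> {1..N} \<Longrightarrow> qbit N k (2 ^ N - 1) = 1"
proof -
  have "bits_index N (\<lambda>_. 1) = 2 ^ N - 1"
    unfolding bits_index_def using mask_eq_sum_exp_nat[of N] by (simp add: lessThan_def)
  then show "k \<in> {1..N} \<Longrightarrow> qbit N k (2 ^ N - 1) = 1"
    using qbit_bits_index[of N "\<lambda>_. 1"] by simp
qed

lemma index_constant_iff:
  assumes "1 \<le> N" "j < 2 ^ N"
  shows "j = 0 \<or> j = 2 ^ N - 1 \<longleftrightarrow> (\<forall>k\<in>{1..N}. qbit N k j = qbit N N j)"
proof
  assume const: "\<forall>k\<in>{1..N}. qbit N k j = qbit N N j"
  from qbit_cases[of N N j] show "j = 0 \<or> j = 2 ^ N - 1"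
  proof
    assume "qbit N N j = 0"
    then have "j = 0" using const by (intro index_eqI[OF assms(2)]) simp_all
    then show ?thesis ..
  next
    assume "qbit N N j = 1"
    then have "j = 2 ^ N - 1" using const qbit_max_index by (intro index_eqI[OF assms(2)]) simp_all
    then show ?thesis ..
  qed
next
  assume "j = 0 \<or> j = 2 ^ N - 1"
  moreover have "N \<in> {1..N}" using assms(1) by simp
  ultimately show "\<forall>k\<in>{1..N}. qbit N k j = qbit N N j" using qbit_max_index by auto
qed

definition flip_bits :: "nat \<Rightarrow> nat set \<Rightarrow> nat \<Rightarrow> nat" where
  "flip_bits N K i = bits_index N (\<lambda>k. if k \<in> K then 1 - qbit N k i else qbit N k i)"

lemma flip_bits_less: "flip_bits N K i < 2 ^ N"
  unfolding flip_bits_def by (rule bits_index_less) auto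

lemma qbit_flip_bits:
  "k \<in> {1..N} \<Longrightarrow> qbit N k (flip_bits N K i) = (if k \<in> K then 1 - qbit N k i else qbit N k i)"
  unfolding flip_bits_def by (rule qbit_bits_index) auto

lemma flip_bits_flip_bits: "i < 2 ^ N \<Longrightarrow> flip_bits N K (flip_bits N K i) = i"
  by (rule index_eqI[OF flip_bits_less]) (auto simp: qbit_flip_bits)

lemma flip_bits_empty: "i < 2 ^ N \<Longrightarrow> flip_bits N {} i = i"
  unfolding flip_bits_def by (simp add: bits_index_qbit)

lemma eq_flip_bits_iff:
  "i < 2 ^ N \<Longrightarrow> j < 2 ^ N \<Longrightarrow> i = flip_bits N K j \<longleftrightarrow> j = flip_bits N K i"
  using flip_bits_flip_bits by metis

text \<open>A constant of its own, so that the simplifier does not rewrite the set {1..N} inside it.\<close>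

definition flip_all :: "nat \<Rightarrow> nat \<Rightarrow> nat" where
  "flip_all N = flip_bits N {1..N}"

lemma flip_all_less: "flip_all N i < 2 ^ N"
  unfolding flip_all_def by (rule flip_bits_less)

lemma qbit_flip_all: "k \<in> {1..N} \<Longrightarrow> qbit N k (flip_all N i) = 1 - qbit N k i"
  unfolding flip_all_def by (simp add: qbit_flip_bits)

lemma flip_all_flip_all: "i < 2 ^ N \<Longrightarrow> flip_all N (flip_all N i) = i"
  unfolding flip_all_def by (rule flip_bits_flip_bits)

section \<open>The CHSH operator\<close>

lemma sigma_z_index:
  "p < 2 \<Longrightarrow> q < 2 \<Longrightarrow> sigma_z $$ (p, q) = (if p = q then (if p = 0 then 1 else -1) else 0)"
  by (auto simp: sigma_z_def mat_of_rows_list_def less_2_cases_iff)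

lemma sigma_x_index: "p < 2 \<Longrightarrow> q < 2 \<Longrightarrow> sigma_x $$ (p, q) = (if p = q then 0 else 1)"
  by (auto simp: sigma_x_def mat_of_rows_list_def less_2_cases_iff)

lemma sigma_dims [simp]:
  "dim_row sigma_z = 2" "dim_col sigma_z = 2" "dim_row sigma_x = 2" "dim_col sigma_x = 2"
  by (simp_all add: sigma_z_def sigma_x_def mat_of_rows_list_def)

lemma tensor_ops_carrier [simp]: "tensor_ops N A \<in> carrier_mat (2 ^ N) (2 ^ N)"
  by (simp add: tensor_ops_def)

lemma tensor_ops_dims [simp]: "dim_row (tensor_ops N A) = 2 ^ N" "dim_col (tensor_ops N A) = 2 ^ N"
  by (simp_all add: tensor_ops_def)

lemma tensor_ops_index:
  "i < 2 ^ N \<Longrightarrow> j < 2 ^ N \<Longrightarrow>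
   tensor_ops N A $$ (i, j) = (\<Prod>k\<in>{1..N}. A k $$ (qbit N k i, qbit N k j))"
  by (simp add: tensor_ops_def)

lemma tensor_ops_index_split_last:
  assumes "1 \<le> N" "i < 2 ^ N" "j < 2 ^ N"
  shows "tensor_ops N A $$ (i, j)
       = (\<Prod>k\<in>{1..N-1}. A k $$ (qbit N k i, qbit N k j)) * A N $$ (qbit N N i, qbit N N j)"
proof -
  have "{1..N} = insert N {1..N-1}" using assms(1) by auto
  then show ?thesis unfolding tensor_ops_index[OF assms(2,3)] using assms(1) by (simp add: mult.commute)
qed

lemma tensor_ops_cong: "(\<And>k. k \<in> {1..N} \<Longrightarrow> A k = B k) \<Longrightarrow> tensor_ops N A = tensor_ops N B"
  unfolding tensor_ops_def by (intro cong_mat refl) (auto intro: prod.cong)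

lemma tensor_flip_index:
  assumes "i < 2 ^ N" "j < 2 ^ N"
  shows "tensor_ops N (\<lambda>k. if k \<in> K then sigma_x else 1\<^sub>m 2) $$ (i, j)
           = (if i = flip_bits N K j then 1 else 0)"
proof -
  have factor: "(if k \<in> K then sigma_x else 1\<^sub>m 2) $$ (qbit N k i, qbit N k j)
      = (if qbit N k i = qbit N k (flip_bits N K j) then 1 else 0)" if "k \<in> {1..N}" for k
    using that qbit_less_2[of N k i] qbit_less_2[of N k j]
    by (auto simp: qbit_flip_bits sigma_x_index less_2_cases_iff)
  have "tensor_ops N (\<lambda>k. if k \<in> K then sigma_x else 1\<^sub>m 2) $$ (i, j)
      = (\<Prod>k\<in>{1..N}. if qbit N k i = qbit N k (flip_bits N K j) then 1 else 0)"
    unfolding tensor_ops_index[OF assms] by (rule prod.cong) (simp_all add: factor)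
  also have "\<dots> = (if \<forall>k\<in>{1..N}. qbit N k i = qbit N k (flip_bits N K j) then 1 else 0)"
    by (simp add: prod_if_else_zero)
  also have "\<dots> = (if i = flip_bits N K j then 1 else 0)"
    using index_eq_iff_qbits_eq[OF assms(1) flip_bits_less] by simp
  finally show ?thesis .
qed

lemma tensor_flip_mult_vec:
  assumes "v \<in> carrier_vec (2 ^ N)" "i < 2 ^ N"
  shows "(tensor_ops N (\<lambda>k. if k \<in> K then sigma_x else 1\<^sub>m 2) *\<^sub>v v) $ i = v $ flip_bits N K i"
proof -
  have "(tensor_ops N (\<lambda>k. if k \<in> K then sigma_x else 1\<^sub>m 2) *\<^sub>v v) $ i
      = (\<Sum>j<2 ^ N. (if i = flip_bits N K j then 1 else 0) * v $ j)"
    unfolding mult_mat_vec_index_sum[OF tensor_ops_carrier assms]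
    using assms(2) by (intro sum.cong) (simp_all add: tensor_flip_index)
  also have "\<dots> = (\<Sum>j<2 ^ N. if j = flip_bits N K i then v $ j else 0)"
    using assms(2) by (intro sum.cong) (auto simp: eq_flip_bits_iff)
  also have "\<dots> = v $ flip_bits N K i"
    using flip_bits_less[of N K i] by simp
  finally show ?thesis .
qed

lemma tensor_sigma_x_mult_vec:
  assumes "v \<in> carrier_vec (2 ^ N)" "i < 2 ^ N"
  shows "(tensor_ops N (\<lambda>_. sigma_x) *\<^sub>v v) $ i = v $ flip_all N i"
proof -
  have "tensor_ops N (\<lambda>_. sigma_x) = tensor_ops N (\<lambda>k. if k \<in> {1..N} then sigma_x else 1\<^sub>m 2)"
    by (rule tensor_ops_cong) simp
  then show ?thesis by (simp only: tensor_flip_mult_vec[OF assms] flip_all_def)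
qed

definition parity_sign :: "nat \<Rightarrow> nat \<Rightarrow> complex" where
  "parity_sign N i = (\<Prod>k\<in>{1..N}. if qbit N k i = 0 then 1 else -1)"

lemma tensor_sigma_z_mult_vec:
  assumes "v \<in> carrier_vec (2 ^ N)" "i < 2 ^ N"
  shows "(tensor_ops N (\<lambda>_. sigma_z) *\<^sub>v v) $ i = parity_sign N i * v $ i"
proof -
  have entry: "tensor_ops N (\<lambda>_. sigma_z) $$ (i, j) = (if i = j then parity_sign N i else 0)"
    if "j < 2 ^ N" for j
  proof -
    have "tensor_ops N (\<lambda>_. sigma_z) $$ (i, j)
        = (\<Prod>k\<in>{1..N}. if qbit N k i = qbit N k j then (if qbit N k i = 0 then 1 else -1) else 0)"
      unfolding tensor_ops_index[OF assms(2) that] by (rule prod.cong) (simp_all add: sigma_z_index)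
    also have "\<dots> = (if i = j then parity_sign N i else 0)"
      unfolding prod_if_else_zero[OF finite_atLeastAtMost] parity_sign_def
      using index_eq_iff_qbits_eq[OF assms(2) that] by simp
    finally show ?thesis .
  qed
  have "(tensor_ops N (\<lambda>_. sigma_z) *\<^sub>v v) $ i = (\<Sum>j<2 ^ N. if j = i then parity_sign N i * v $ i else 0)"
    unfolding mult_mat_vec_index_sum[OF tensor_ops_carrier assms]
    by (intro sum.cong) (simp_all add: entry)
  also have "\<dots> = parity_sign N i * v $ i"
    using assms(2) by simp
  finally show ?thesis .
qed

lemma sqrt2_eq_2_mult_inverse: "complex_of_real (sqrt 2) = 2 * complex_of_real (1 / sqrt 2)"
proof -
  have "sqrt 2 = 2 * (1 / sqrt (2::real))" by (simp add: field_simps)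
  then show ?thesis by (metis of_real_mult of_real_numeral)
qed

lemma AB_op_dims [simp]: "dim_row (AB_op N a b) = 2 ^ N" "dim_col (AB_op N a b) = 2 ^ N"
  by (simp_all add: AB_op_def)

lemma AB_op_index:
  assumes "1 \<le> N" "i < 2 ^ N" "j < 2 ^ N"
  shows "AB_op N a b $$ (i, j)
    = (\<Prod>k\<in>{1..N-1}. (if a = 0 then sigma_z else sigma_x) $$ (qbit N k i, qbit N k j))
      * (complex_of_real (1 / sqrt 2) * (sigma_z $$ (qbit N N i, qbit N N j)
          + (if b = 0 then 1 else -1) * sigma_x $$ (qbit N N i, qbit N N j)))"
proof -
  have "(\<Prod>k\<in>{1..N-1}. (if k < N then (if a = 0 then X_obs N k else X'_obs N k)
          else (if b = 0 then X_obs N k else X'_obs N k)) $$ (qbit N k i, qbit N k j))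
      = (\<Prod>k\<in>{1..N-1}. (if a = 0 then sigma_z else sigma_x) $$ (qbit N k i, qbit N k j))"
    by (cases "a = 0") (auto simp: X_obs_def X'_obs_def intro!: prod.cong)
  moreover have "(if b = 0 then X_obs N N else X'_obs N N) $$ (qbit N N i, qbit N N j)
      = complex_of_real (1 / sqrt 2) * (sigma_z $$ (qbit N N i, qbit N N j)
          + (if b = 0 then 1 else -1) * sigma_x $$ (qbit N N i, qbit N N j))"
    using qbit_less_2[of N N i] qbit_less_2[of N N j] by (simp add: X_obs_def X'_obs_def)
  ultimately show ?thesis
    unfolding AB_op_def tensor_ops_index_split_last[OF assms] by simp
qed

lemma I_CHSH_eq:
  assumes "1 \<le> N"
  shows "I_CHSH N = complex_of_real (sqrt 2) \<cdot>\<^sub>m (tensor_ops N (\<lambda>_. sigma_z) + tensor_ops N (\<lambda>_. sigma_x))"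
    (is "_ = ?R")
proof (rule eq_matI)
  fix i j assume "i < dim_row ?R" "j < dim_col ?R"
  then have i: "i < 2 ^ N" and j: "j < 2 ^ N" by auto
  define z where "z k = sigma_z $$ (qbit N k i, qbit N k j)" for k
  define x where "x k = sigma_x $$ (qbit N k i, qbit N k j)" for k
  have "I_CHSH N $$ (i, j)
      = 2 * complex_of_real (1 / sqrt 2) * ((\<Prod>k\<in>{1..N-1}. z k) * z N + (\<Prod>k\<in>{1..N-1}. x k) * x N)"
    using i j by (simp add: I_CHSH_def AB_op_index[OF assms i j] z_def x_def algebra_simps)
  also have "\<dots> = complex_of_real (sqrt 2) * (tensor_ops N (\<lambda>_. sigma_z) $$ (i, j) + tensor_ops N (\<lambda>_. sigma_x) $$ (i, j))"
    unfolding tensor_ops_index_split_last[OF assms i j] sqrt2_eq_2_mult_inverse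
    by (simp add: z_def x_def)
  finally show "I_CHSH N $$ (i, j) = ?R $$ (i, j)"
    using i j by simp
qed (simp_all add: I_CHSH_def)

lemma I_CHSH_carrier [simp]: "I_CHSH N \<in> carrier_mat (2 ^ N) (2 ^ N)"
  unfolding I_CHSH_def AB_op_def by simp

lemma I_CHSH_mult_vec:
  assumes "1 \<le> N" "v \<in> carrier_vec (2 ^ N)" "i < 2 ^ N"
  shows "(I_CHSH N *\<^sub>v v) $ i = complex_of_real (sqrt 2) * (parity_sign N i * v $ i + v $ flip_all N i)"
proof -
  let ?Z = "tensor_ops N (\<lambda>_. sigma_z)" and ?X = "tensor_ops N (\<lambda>_. sigma_x)"
  have "(I_CHSH N *\<^sub>v v) $ i = (\<Sum>j<2 ^ N. I_CHSH N $$ (i, j) * v $ j)"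
    by (rule mult_mat_vec_index_sum[OF I_CHSH_carrier assms(2,3)])
  also have "\<dots> = (\<Sum>j<2 ^ N. complex_of_real (sqrt 2) * (?Z $$ (i, j) * v $ j + ?X $$ (i, j) * v $ j))"
    unfolding I_CHSH_eq[OF assms(1)] using assms(3) by (intro sum.cong) (simp_all add: algebra_simps)
  also have "\<dots> = complex_of_real (sqrt 2) * ((?Z *\<^sub>v v) $ i + (?X *\<^sub>v v) $ i)"
    unfolding mult_mat_vec_index_sum[OF tensor_ops_carrier assms(2,3)]
    by (simp add: distrib_left sum.distrib sum_distrib_left)
  finally show ?thesis
    by (simp only: tensor_sigma_z_mult_vec[OF assms(2,3)] tensor_sigma_x_mult_vec[OF assms(2,3)])
qed

definition mismatch_set :: "nat \<Rightarrow> nat \<Rightarrow> nat set" where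
  "mismatch_set N i = {k \<in> {1..N-1}. qbit N k i \<noteq> qbit N N i}"

lemma parity_sign_eq_mismatch:
  assumes "1 \<le> N" "even N"
  shows "parity_sign N i = (-1) ^ card (mismatch_set N i)"
proof -
  define sN :: complex where "sN = (if qbit N N i = 0 then 1 else -1)"
  have factor: "(if qbit N k i = 0 then 1 else -1) = sN * (if k \<in> mismatch_set N i then -1 else 1)"
    if "k \<in> {1..N}" for k
    using that qbit_cases[of N k i] qbit_cases[of N N i]
    by (cases "k = N") (auto simp: sN_def mismatch_set_def)
  have "parity_sign N i = (\<Prod>k\<in>{1..N}. sN * (if k \<in> mismatch_set N i then -1 else 1))"
    unfolding parity_sign_def by (rule prod.cong) (simp_all add: factor)
  also have "\<dots> = sN ^ N * (\<Prod>k\<in>{1..N}. if k \<in> mismatch_set N i then -1 else 1)"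
    by (simp add: prod.distrib)
  also have "sN ^ N = 1" using assms(2) by (simp add: sN_def)
  also have "{1..N} \<inter> {k. k \<in> mismatch_set N i} = mismatch_set N i"
    by (auto simp: mismatch_set_def)
  then have "(\<Prod>k\<in>{1..N}. if k \<in> mismatch_set N i then -1 else 1) = ((-1) ^ card (mismatch_set N i) :: complex)"
    by (simp add: prod.If_cases)
  finally show ?thesis by simp
qed

lemma parity_sign_cases:
  assumes "1 \<le> N" "even N"
  shows "parity_sign N i = 1 \<or> parity_sign N i = -1"
  unfolding parity_sign_eq_mismatch[OF assms] by (metis neg_one_even_power neg_one_odd_power)

lemma mismatch_set_flip_all: "mismatch_set N (flip_all N i) = mismatch_set N i"
  unfolding mismatch_set_def
proof (rule Collect_cong)
  fix k
  have "qbit N k (flip_all N i) \<noteq> qbit N N (flip_all N i) \<longleftrightarrow> qbit N k i \<noteq> qbit N N i"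
    if "k \<in> {1..N-1}"
  proof -
    have "k \<in> {1..N}" "N \<in> {1..N}" using that by auto
    then show ?thesis using qbit_cases[of N k i] qbit_cases[of N N i] by (auto simp: qbit_flip_all)
  qed
  then show "k \<in> {1..N-1} \<and> qbit N k (flip_all N i) \<noteq> qbit N N (flip_all N i)
      \<longleftrightarrow> k \<in> {1..N-1} \<and> qbit N k i \<noteq> qbit N N i"
    by blast
qed

lemma parity_sign_flip_all:
  assumes "1 \<le> N" "even N"
  shows "parity_sign N (flip_all N i) = parity_sign N i"
  unfolding parity_sign_eq_mismatch[OF assms] mismatch_set_flip_all ..

lemma I_CHSH_paired_sign_operator:
  assumes "1 \<le> N" "even N"
  shows "paired_sign_operator (2 ^ N) (I_CHSH N) (complex_of_real (sqrt 2)) (flip_all N) (parity_sign N)"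
proof
  show "\<And>v i. v \<in> carrier_vec (2 ^ N) \<Longrightarrow> i < 2 ^ N \<Longrightarrow> (I_CHSH N *\<^sub>v v) $ i
      = complex_of_real (sqrt 2) * (parity_sign N i * v $ i + v $ flip_all N i)"
    by (rule I_CHSH_mult_vec[OF assms(1)])
  show "\<And>i. parity_sign N (flip_all N i) = parity_sign N i"
    by (rule parity_sign_flip_all[OF assms])
qed (simp_all add: flip_all_less flip_all_flip_all parity_sign_cases[OF assms])

section \<open>The flip states\<close>

lemma ghz_carrier [simp]: "ghz N \<in> carrier_vec (2 ^ N)"
  by (simp add: ghz_def)

lemma flip_state_carrier [simp]: "flip_state N K \<in> carrier_vec (2 ^ N)"
  unfolding flip_state_def by (rule mult_mat_vec_carrier[OF tensor_ops_carrier ghz_carrier])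

lemma flip_state_index:
  assumes "1 \<le> N" "K \<subseteq> {1..N-1}" "i < 2 ^ N"
  shows "flip_state N K $ i = (if mismatch_set N i = K then complex_of_real (1 / sqrt 2) else 0)"
proof -
  have "N \<notin> K" using assms(1,2) by auto
  have bit: "qbit N k (flip_bits N K i) = qbit N N (flip_bits N K i) \<longleftrightarrow> (k \<in> K \<longleftrightarrow> qbit N k i \<noteq> qbit N N i)"
    if "k \<in> {1..N}" for k
    using that assms(1) \<open>N \<notin> K\<close> qbit_cases[of N k i] qbit_cases[of N N i]
    by (auto simp: qbit_flip_bits)
  have "flip_bits N K i = 0 \<or> flip_bits N K i = 2 ^ N - 1
      \<longleftrightarrow> (\<forall>k\<in>{1..N}. qbit N k (flip_bits N K i) = qbit N N (flip_bits N K i))"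
    by (rule index_constant_iff[OF assms(1) flip_bits_less])
  also have "\<dots> \<longleftrightarrow> (\<forall>k\<in>{1..N}. k \<in> K \<longleftrightarrow> qbit N k i \<noteq> qbit N N i)"
    by (rule ball_cong[OF refl bit])
  also have "\<dots> \<longleftrightarrow> (\<forall>k\<in>{1..N-1}. k \<in> K \<longleftrightarrow> qbit N k i \<noteq> qbit N N i)"
  proof -
    have "{1..N} = insert N {1..N-1}" using assms(1) by auto
    then show ?thesis using \<open>N \<notin> K\<close> by simp
  qed
  also have "\<dots> \<longleftrightarrow> mismatch_set N i = K"
    unfolding mismatch_set_def by (rule Collect_restrict_eq_iff[OF assms(2), symmetric])
  finally have branch: "flip_bits N K i = 0 \<or> flip_bits N K i = 2 ^ N - 1 \<longleftrightarrow> mismatch_set N i = K" .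
  have "flip_state N K $ i = ghz N $ flip_bits N K i"
    unfolding flip_state_def by (rule tensor_flip_mult_vec[OF ghz_carrier assms(3)])
  also have "\<dots> = (if flip_bits N K i = 0 \<or> flip_bits N K i = 2 ^ N - 1 then complex_of_real (1 / sqrt 2) else 0)"
    using flip_bits_less[of N K i] by (simp add: ghz_def)
  finally show ?thesis unfolding branch .
qed

definition subset_index :: "nat \<Rightarrow> nat set \<Rightarrow> nat" where
  "subset_index N K = bits_index N (\<lambda>k. if k \<in> K then 1 else 0)"

lemma subset_index_less: "subset_index N K < 2 ^ N"
  unfolding subset_index_def by (rule bits_index_less) simp

lemma qbit_subset_index: "k \<in> {1..N} \<Longrightarrow> qbit N k (subset_index N K) = (if k \<in> K then 1 else 0)"
  unfolding subset_index_def by (rule qbit_bits_index) simp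

lemma mismatch_set_eq_iff:
  assumes "1 \<le> N" "K \<subseteq> {1..N-1}" "i < 2 ^ N"
  shows "mismatch_set N i = K \<longleftrightarrow> i = subset_index N K \<or> i = flip_all N (subset_index N K)"
proof
  have "N \<notin> K" "N \<in> {1..N}" using assms(1,2) by auto
  assume mismatch: "mismatch_set N i = K"
  have bits: "qbit N k i = (if k \<in> K then 1 - qbit N N i else qbit N N i)" if "k \<in> {1..N}" for k
    using that qbit_cases[of N k i] qbit_cases[of N N i] mismatch \<open>N \<notin> K\<close>
    by (cases "k = N") (auto simp: mismatch_set_def)
  from qbit_cases[of N N i]
  show "i = subset_index N K \<or> i = flip_all N (subset_index N K)"
  proof
    assume "qbit N N i = 0"
    then show ?thesis
      using bits by (intro disjI1 index_eqI[OF assms(3) subset_index_less]) (simp add: qbit_subset_index)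
  next
    assume "qbit N N i = 1"
    then show ?thesis
      using bits by (intro disjI2 index_eqI[OF assms(3) flip_all_less]) (simp add: qbit_flip_all qbit_subset_index)
  qed
next
  have "qbit N k (subset_index N K) \<noteq> qbit N N (subset_index N K) \<longleftrightarrow> k \<in> K" if "k \<in> {1..N-1}" for k
  proof -
    have "k \<in> {1..N}" "N \<in> {1..N}" "N \<notin> K" using that assms(1,2) by auto
    then show ?thesis by (simp add: qbit_subset_index)
  qed
  then have "mismatch_set N (subset_index N K) = K"
    unfolding mismatch_set_def Collect_restrict_eq_iff[OF assms(2)] by blast
  then show "i = subset_index N K \<or> i = flip_all N (subset_index N K) \<Longrightarrow> mismatch_set N i = K"
    using mismatch_set_flip_all by auto
qed

lemma subset_index_neq_flip_all:
  assumes "1 \<le> N" "K \<subseteq> {1..N-1}"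
  shows "subset_index N K \<noteq> flip_all N (subset_index N K)"
proof -
  have "N \<notin> K" "N \<in> {1..N}" using assms by auto
  then have "qbit N N (subset_index N K) \<noteq> qbit N N (flip_all N (subset_index N K))"
    by (simp add: qbit_flip_all qbit_subset_index)
  then show ?thesis by metis
qed

lemma of_real_sqrt2_squared: "complex_of_real (sqrt 2) * complex_of_real (sqrt 2) = 2"
  by (simp flip: of_real_mult)

lemma flip_states_orthonormal:
  assumes "1 \<le> N" "K \<subseteq> {1..N-1}" "K' \<subseteq> {1..N-1}"
  shows "flip_state N K' \<bullet>c flip_state N K = (if K = K' then 1 else 0)"
proof -
  define c where "c = complex_of_real (1 / sqrt 2)"
  define j where "j = subset_index N K"
  have fibre: "{i \<in> {..<2 ^ N}. mismatch_set N i = K} = {j, flip_all N j}"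
  proof (rule Set.set_eqI)
    fix i
    show "i \<in> {i \<in> {..<2 ^ N}. mismatch_set N i = K} \<longleftrightarrow> i \<in> {j, flip_all N j}"
      using mismatch_set_eq_iff[OF assms(1,2), of i] subset_index_less[of N K] flip_all_less[of N j]
      unfolding j_def by (cases "i < 2 ^ N") auto
  qed
  have "flip_state N K' \<bullet>c flip_state N K = (\<Sum>i<2 ^ N. if mismatch_set N i = K then (if K = K' then c * c else 0) else 0)"
    unfolding cscalar_prod_sum[OF flip_state_carrier flip_state_carrier]
    by (intro sum.cong) (auto simp: flip_state_index[OF assms(1,2)] flip_state_index[OF assms(1,3)] c_def)
  also have "\<dots> = (\<Sum>i\<in>{i \<in> {..<2 ^ N}. mismatch_set N i = K}. if K = K' then c * c else 0)"
    by (rule sum.inter_filter[symmetric]) simp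
  also have "\<dots> = (\<Sum>i\<in>{j, flip_all N j}. if K = K' then c * c else 0)"
    unfolding fibre ..
  also have "\<dots> = (if K = K' then 1 else 0)"
    using subset_index_neq_flip_all[OF assms(1,2)] unfolding j_def c_def by (simp add: of_real_sqrt2_squared)
  finally show ?thesis .
qed

lemma flip_state_top_eigenvector:
  assumes "1 \<le> N" "even N" "K \<subseteq> {1..N-1}" "even (card K)"
  shows "I_CHSH N *\<^sub>v flip_state N K = complex_of_real (2 * sqrt 2) \<cdot>\<^sub>v flip_state N K"
proof -
  interpret paired_sign_operator "2 ^ N" "I_CHSH N" "complex_of_real (sqrt 2)" "flip_all N" "parity_sign N"
    by (rule I_CHSH_paired_sign_operator[OF assms(1,2)])
  have "flip_state N K $ flip_all N i = flip_state N K $ i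
      \<and> (parity_sign N i = -1 \<longrightarrow> flip_state N K $ i = 0)" if "i < 2 ^ N" for i
  proof -
    have "parity_sign N i = -1 \<Longrightarrow> mismatch_set N i \<noteq> K"
      using assms(4) unfolding parity_sign_eq_mismatch[OF assms(1,2)] by (auto simp: neg_one_even_power)
    then show ?thesis
      using that flip_all_less[of N i]
      by (simp add: flip_state_index[OF assms(1,3)] mismatch_set_flip_all)
  qed
  then show ?thesis using top_eigenvector_iff[OF flip_state_carrier] by simp
qed

lemma flip_state_empty: "flip_state N {} = ghz N"
proof (rule eq_vecI)
  fix i assume "i < dim_vec (ghz N)"
  then have i: "i < 2 ^ N" by (simp add: ghz_def)
  show "flip_state N {} $ i = ghz N $ i"
    unfolding flip_state_def tensor_flip_mult_vec[OF ghz_carrier i] flip_bits_empty[OF i] ..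
qed (simp add: ghz_def)

definition even_flip_sets :: "nat \<Rightarrow> nat set set" where
  "even_flip_sets N = {K. K \<subseteq> {1..N-1} \<and> even (card K)}"

lemma finite_even_flip_sets: "finite (even_flip_sets N)"
  unfolding even_flip_sets_def by (rule finite_subset[of _ "Pow {1..N-1}"]) auto

lemma card_even_flip_sets:
  assumes "2 \<le> N"
  shows "card (even_flip_sets N) = 2 ^ (N - 2)"
proof -
  have "2 * card (even_flip_sets N) = 2 ^ (N - 1)"
    unfolding even_flip_sets_def using card_even_subsets[of "{1..N-1}"] assms by simp
  moreover have "(2::nat) ^ (N - 1) = 2 * 2 ^ (N - 2)"
    using assms by (simp flip: power_Suc add: Suc_diff_Suc numeral_2_eq_2)
  ultimately show ?thesis by simp
qed

lemma inj_on_flip_state: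
  assumes "1 \<le> N"
  shows "inj_on (flip_state N) (even_flip_sets N)"
proof
  fix K K' assume "K \<in> even_flip_sets N" "K' \<in> even_flip_sets N" "flip_state N K = flip_state N K'"
  then show "K = K'"
    using flip_states_orthonormal[OF assms, of K K'] flip_states_orthonormal[OF assms, of K K]
    unfolding even_flip_sets_def by (auto split: if_splits)
qed

context
  fixes N :: nat
begin

interpretation NC: vec_space "TYPE(complex)" "2 ^ N" .

lemma lincomb_flip_states_index:
  assumes "1 \<le> N" "i < 2 ^ N"
  shows "NC.lincomb a (flip_state N ` even_flip_sets N) $ i
    = (if even (card (mismatch_set N i)) then a (flip_state N (mismatch_set N i)) * complex_of_real (1 / sqrt 2) else 0)"
proof -
  have subset: "mismatch_set N i \<subseteq> {1..N-1}" by (auto simp: mismatch_set_def)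
  have "NC.lincomb a (flip_state N ` even_flip_sets N) $ i
      = (\<Sum>w\<in>flip_state N ` even_flip_sets N. a w * w $ i)"
    using assms(2) by (intro NC.lincomb_index) auto
  also have "\<dots> = (\<Sum>K\<in>even_flip_sets N. a (flip_state N K) * flip_state N K $ i)"
    by (rule sum.reindex[OF inj_on_flip_state[OF assms(1)], unfolded comp_def])
  also have "\<dots> = (\<Sum>K\<in>even_flip_sets N. if K = mismatch_set N i then a (flip_state N K) * complex_of_real (1 / sqrt 2) else 0)"
    using assms by (intro sum.cong) (auto simp: even_flip_sets_def flip_state_index)
  also have "\<dots> = (if even (card (mismatch_set N i)) then a (flip_state N (mismatch_set N i)) * complex_of_real (1 / sqrt 2) else 0)"
    using subset finite_even_flip_sets[of N] by (simp add: sum.delta' even_flip_sets_def)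
  finally show ?thesis .
qed

lemma top_eigenvector_in_span:
  assumes "1 \<le> N" "even N" "v \<in> carrier_vec (2 ^ N)"
    and "I_CHSH N *\<^sub>v v = complex_of_real (2 * sqrt 2) \<cdot>\<^sub>v v"
  shows "v \<in> NC.span (flip_state N ` even_flip_sets N)"
proof -
  interpret paired_sign_operator "2 ^ N" "I_CHSH N" "complex_of_real (sqrt 2)" "flip_all N" "parity_sign N"
    by (rule I_CHSH_paired_sign_operator[OF assms(1,2)])
  have pairs: "\<And>i. i < 2 ^ N \<Longrightarrow> v $ flip_all N i = v $ i \<and> (parity_sign N i = -1 \<longrightarrow> v $ i = 0)"
    using assms(4) top_eigenvector_iff[OF assms(3)] by simp
  let ?F = "flip_state N ` even_flip_sets N"
  define a where "a w = complex_of_real (sqrt 2) * v $ subset_index N (inv_into (even_flip_sets N) (flip_state N) w)" for w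
  have "finite ?F" "?F \<subseteq> carrier_vec (2 ^ N)" using finite_even_flip_sets[of N] by auto
  then have dim: "dim_vec (NC.lincomb a ?F) = 2 ^ N" by (rule NC.lincomb_dim)
  have "v = NC.lincomb a ?F"
  proof (rule eq_vecI)
    fix i assume "i < dim_vec (NC.lincomb a ?F)"
    then have i: "i < 2 ^ N" unfolding dim .
    have mismatch: "mismatch_set N i \<subseteq> {1..N-1}" by (auto simp: mismatch_set_def)
    then have "subset_index N (mismatch_set N i) = i \<or> subset_index N (mismatch_set N i) = flip_all N i"
      using mismatch_set_eq_iff[OF assms(1) mismatch i] flip_all_flip_all[OF subset_index_less] by metis
    then have same: "v $ subset_index N (mismatch_set N i) = v $ i"
      using pairs[OF i] by auto
    have "odd (card (mismatch_set N i)) \<Longrightarrow> v $ i = 0"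
      using pairs[OF i] parity_sign_eq_mismatch[OF assms(1,2)] by simp
    moreover have "a (flip_state N (mismatch_set N i)) * complex_of_real (1 / sqrt 2) = v $ i"
      if "even (card (mismatch_set N i))"
      using that mismatch same inv_into_f_f[OF inj_on_flip_state[OF assms(1)]]
      by (simp add: a_def even_flip_sets_def)
    ultimately show "v $ i = NC.lincomb a ?F $ i"
      unfolding lincomb_flip_states_index[OF assms(1) i] by auto
  qed (use assms(3) dim in simp)
  then show ?thesis
    using finite_even_flip_sets[of N] by (intro NC.in_spanI) auto
qed

lemma top_eigenspace_eq_span:
  assumes "1 \<le> N" "even N"
  shows "{v \<in> carrier_vec (2 ^ N). I_CHSH N *\<^sub>v v = complex_of_real (2 * sqrt 2) \<cdot>\<^sub>v v}
    = NC.span (flip_state N ` even_flip_sets N)"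
proof
  show "NC.span (flip_state N ` even_flip_sets N)
      \<subseteq> {v \<in> carrier_vec (2 ^ N). I_CHSH N *\<^sub>v v = complex_of_real (2 * sqrt 2) \<cdot>\<^sub>v v}"
    using flip_state_top_eigenvector[OF assms]
    by (intro NC.span_subset_eigenspace[OF I_CHSH_carrier]) (auto simp: even_flip_sets_def)
qed (use top_eigenvector_in_span[OF assms] in blast)

lemma flip_states_lin_indpt:
  assumes "1 \<le> N"
  shows "NC.lin_indpt (flip_state N ` even_flip_sets N)"
  using finite_even_flip_sets[of N] flip_states_orthonormal[OF assms]
  by (intro lin_indpt_if_orthonormal) (auto simp: even_flip_sets_def)

end

lemma ghz_top_eigenvector:
  assumes "1 \<le> N" "even N"
  shows "I_CHSH N *\<^sub>v ghz N = complex_of_real (2 * sqrt 2) \<cdot>\<^sub>v ghz N"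
  using flip_state_top_eigenvector[OF assms, of "{}"] by (simp add: flip_state_empty)

lemma ghz_cscalar_prod_self: "1 \<le> N \<Longrightarrow> ghz N \<bullet>c ghz N = 1"
  using flip_states_orthonormal[of N "{}" "{}"] by (simp add: flip_state_empty)

lemma I_CHSH_eigenvalue_le:
  assumes "1 \<le> N" "even N" "eigenvalue (I_CHSH N) mu"
  shows "Im mu = 0 \<and> Re mu \<le> 2 * sqrt 2"
proof -
  interpret paired_sign_operator "2 ^ N" "I_CHSH N" "complex_of_real (sqrt 2)" "flip_all N" "parity_sign N"
    by (rule I_CHSH_paired_sign_operator[OF assms(1,2)])
  consider "mu = 2 * complex_of_real (sqrt 2)" | "mu = 0" | "mu = - 2 * complex_of_real (sqrt 2)"
    using eigenvalue_cases[OF assms(3)] by blast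
  then show ?thesis by cases simp_all
qed

lemma dim_top_eigenspace:
  assumes "2 \<le> N" "even N"
  shows "dim_gen_eigenspace (I_CHSH N) (complex_of_real (2 * sqrt 2)) 1 = 2 ^ (N - 2)"
proof -
  interpret NC: vec_space "TYPE(complex)" "2 ^ N" .
  have N: "1 \<le> N" using assms(1) by simp
  have "dim_gen_eigenspace (I_CHSH N) (complex_of_real (2 * sqrt 2)) 1
      = card (flip_state N ` even_flip_sets N)"
    by (rule NC.dim_gen_eigenspace_eq_card[OF I_CHSH_carrier _ _ flip_states_lin_indpt[OF N]
          top_eigenspace_eq_span[OF N assms(2), symmetric]])
      (auto simp: finite_even_flip_sets)
  also have "\<dots> = 2 ^ (N - 2)"
    using card_image[OF inj_on_flip_state[OF N]] card_even_flip_sets[OF assms(1)] by simp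
  finally show ?thesis .
qed

theorem mainTheorem4:
  fixes N :: nat
  assumes "N \<ge> 4" and "even N"
  shows "(I_CHSH N *\<^sub>v ghz N) \<bullet>c ghz N = complex_of_real (2 * sqrt 2)
     \<and> eigenvalue (I_CHSH N) (complex_of_real (2 * sqrt 2))
     \<and> (\<forall>mu. eigenvalue (I_CHSH N) mu \<longrightarrow> Im mu = 0 \<and> Re mu \<le> 2 * sqrt 2)
     \<and> dim_gen_eigenspace (I_CHSH N) (complex_of_real (2 * sqrt 2)) 1 = 2 ^ (N - 2)
     \<and> (\<forall>K\<in>{K. K \<subseteq> {1..N-1} \<and> even (card K)}. \<forall>K'\<in>{K. K \<subseteq> {1..N-1} \<and> even (card K)}.
          flip_state N K' \<bullet>c flip_state N K = (if K = K' then 1 else 0))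
     \<and> {v \<in> carrier_vec (2 ^ N). I_CHSH N *\<^sub>v v = complex_of_real (2 * sqrt 2) \<cdot>\<^sub>v v}
       = module.span class_ring (module_vec TYPE(complex) (2 ^ N))
           (flip_state N ` {K. K \<subseteq> {1..N-1} \<and> even (card K)})"
proof -
  have N: "1 \<le> N" "2 \<le> N" using assms(1) by simp_all
  have "ghz N \<noteq> 0\<^sub>v (2 ^ N)" using ghz_cscalar_prod_self[OF N(1)] by auto
  then have "eigenvalue (I_CHSH N) (complex_of_real (2 * sqrt 2))"
    using ghz_top_eigenvector[OF N(1) assms(2)] carrier_matD[OF I_CHSH_carrier]
    unfolding eigenvalue_def eigenvector_def by (auto intro!: exI[of _ "ghz N"])
  moreover have "(I_CHSH N *\<^sub>v ghz N) \<bullet>c ghz N = complex_of_real (2 * sqrt 2)"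
    using ghz_cscalar_prod_self[OF N(1)] unfolding ghz_top_eigenvector[OF N(1) assms(2)] by simp
  ultimately show ?thesis
    using I_CHSH_eigenvalue_le[OF N(1) assms(2)] dim_top_eigenspace[OF N(2) assms(2)]
      flip_states_orthonormal[OF N(1)] top_eigenspace_eq_span[OF N(1) assms(2)]
    unfolding even_flip_sets_def by auto
qed

end
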